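(* In the setting described in the context, for every $\delta\le\delta_0$ and every $k\ge0$, the tubular neighborhood $$T_k(\delta)=\gamma_k\big(B(\gamma_k^{-1}L_k,\delta)\big)$$ of $L_k$ is disjoint from $L_{k+1}$.
   Context: $\mathbb{R}^{2,1}$ is $\mathbb{R}^3$ with $\mathbb{B}(u,v)=u_1v_1+u_2v_2-u_3v_3$; $\mathbb{E}$ is the affine space modelled on it; $\operatorname{Isom}^0(\mathbb{E})$ consists of maps $x\mapsto gx+b$ with $g\in\mathrm{SO}^0(2,1)$. $\rho$ is Euclidean distance and $B(S,\delta)$ the open Euclidean $\delta$-neighborhood. Crooked planes: with $v_0=(1,0,0)$, $S_0=\{(0,u_2,u_3):|u_3|\ge|u_2|\}$, $W_0^\mp=\{\pm u_1\le 0$ ... $\}$ precisely $W_0^-=\{u_1\le0,u_2=u_3\}$, $W_0^+=\{u_1\ge0,u_2=-u_3\}$, $\mathcal{C}_0=W_0^-\cup S_0\cup W_0^+$; for unit-spacelike $u$ and $g\in\mathrm{SO}^0(2,1)$ with $gv_0=u$, $\mathcal{C}(u,p)=p+g(\mathcal{C}_0)$ has vertex $p$ and stem $p+g(S_0)$; the crooked half-space $\mathcal{H}(u,p)$ is the component of $\mathbb{E}-\mathcal{C}(u,p)$ containing $p+\{w:\mathbb{B}(w,w)<0,w_3>0,\mathbb{B}(w,u)>0\}$, and its angle is the length of the arc $\{w\in S^1:\mathbb{B}(w,u)>0\}$ of $S^1=\{(\cos\phi,\sin\phi,1)\}$. Setting: $h_1,\dots,h_m\in\operatorname{Isom}^0(\mathbb{E})$,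 pairwise disjoint crooked half-spaces $\mathcal{H}_i^j$ ($(i,j)\in\{1,\dots,m\}\times\{+1,-1\}$) with $h_i(\mathcal{H}_i^-)=\mathbb{E}-\overline{\mathcal{H}_i^+}$, $\Gamma=\langle h_1,\dots,h_m\rangle$, $h_i^j:=h_i^{\,j}$, $X=\mathbb{E}-\bigcup\overline{\mathcal{H}_i^j}$. $\delta_0>0$ is such that $B(\mathbb{E}-\mathcal{H}_i^j,\delta_0)\subset\mathbb{E}-h_i^j\overline{\mathcal{H}_{i'}^{j'}}$ whenever $(i,j)\ne(i',-j')$. A point $p\in\mathbb{E}-\Gamma\overline{X}$ is given, together with a sequence $(i_k,j_k)_{k\ge0}$ with $(i_k,j_k)\ne(i_{k+1},-j_{k+1})$, elements $\gamma_k=h_{i_0}^{j_0}\cdots h_{i_{k-1}}^{j_{k-1}}$, and crooked half-spaces $\mathfrak{H}_k=\gamma_k\mathcal{H}_{i_k}^{j_k}$ with $\mathfrak{H}_k\supsetneq\mathfrak{H}_{k+1}$, $p\in\mathfrak{H}_k$, and the angle of $\mathfrak{H}_0$ less than $\pi/2$. $P$ is an affine plane through $p$ whose direction is a definite plane (on which $\mathbb{B}$ is positive definite) and which contains the vertex of no crooked plane $\gamma\partial\mathcal{H}_i^j$; then each $\partial\mathfrak{H}_k\cap P$ is a zigzag (two rays joined by a segment, the intersection of $P$ with the stem), whose vertices are the endpoints of this segment. $\nu$ is a line in $P$ parallel to the segment $P\cap(\text{stem of }\partial\mathfrak{H}_0)$. For each $k$, $L_k\subset P$ is the line perpendicular (in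 the Euclidean sense) to $\nu$ which bounds a half-plane $\Pi_k\subset P$ containing $\mathfrak{H}_k\cap P$ and passes through a vertex of the zigzag $\partial\mathfrak{H}_k\cap P$. *)

theory Defs
  imports "HOL-Analysis.Analysis"
begin

type_synonym pt = "real^3"

definition mB :: "pt \<Rightarrow> pt \<Rightarrow> real" where
  "mB u v = u$1 * v$1 + u$2 * v$2 - u$3 * v$3"

text \<open>SO^0(2,1): B-preserving, determinant one, time-orientation preserving
  (this is the identity component).\<close>
definition SO0 :: "(real^3^3) set" where
  "SO0 = {g. (\<forall>u v. mB (g *v u) (g *v v) = mB u v) \<and> det g = 1 \<and> g$3$3 > 0}"

definition isom0 :: "(pt \<Rightarrow> pt) \<Rightarrow> bool" where
  "isom0 f \<longleftrightarrow> (\<exists>g b. g \<in> SO0 \<and> f = (\<lambda>x. g *v x + b))"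

definition nbhd :: "pt set \<Rightarrow> real \<Rightarrow> pt set" where
  "nbhd S \<delta> = {x. \<exists>s\<in>S. dist x s < \<delta>}"

definition v0 :: pt where "v0 = vector [1, 0, 0]"

definition S0 :: "pt set" where
  "S0 = {x. x$1 = 0 \<and> \<bar>x$3\<bar> \<ge> \<bar>x$2\<bar>}"
definition W0m :: "pt set" where
  "W0m = {x. x$1 \<le> 0 \<and> x$2 = x$3}"
definition W0p :: "pt set" where
  "W0p = {x. x$1 \<ge> 0 \<and> x$2 = - x$3}"
definition C0 :: "pt set" where
  "C0 = W0m \<union> S0 \<union> W0p"

definition unit_spacelike :: "pt \<Rightarrow> bool" where
  "unit_spacelike u \<longleftrightarrow> mB u u = 1"

text \<open>A choice of g in SO^0(2,1) with g v0 = u (the crooked plane does not depend on it).\<close>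
definition gsel :: "pt \<Rightarrow> real^3^3" where
  "gsel u = (SOME g. g \<in> SO0 \<and> g *v v0 = u)"

definition crooked_plane :: "pt \<Rightarrow> pt \<Rightarrow> pt set" where
  "crooked_plane u p = (\<lambda>x. p + gsel u *v x) ` C0"

definition stem :: "pt \<Rightarrow> pt \<Rightarrow> pt set" where
  "stem u p = (\<lambda>x. p + gsel u *v x) ` S0"

definition hs_cone :: "pt \<Rightarrow> pt set" where
  "hs_cone u = {w. mB w w < 0 \<and> w$3 > 0 \<and> mB w u > 0}"

definition crooked_halfspace :: "pt \<Rightarrow> pt \<Rightarrow> pt set" where
  "crooked_halfspace u p =
     \<Union> {connected_component_set (- crooked_plane u p) x | x. x \<in> (\<lambda>w. p + w) ` hs_cone u}"

definition hs_angle :: "pt \<Rightarrow> real" where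
  "hs_angle u = measure lebesgue {\<phi> \<in> {0..<2*pi}. mB (vector [cos \<phi>, sin \<phi>, 1]) u > 0}"

definition Idx :: "nat \<Rightarrow> (nat \<times> int) set" where
  "Idx m = {1..m} \<times> {1, -1}"

definition hpow :: "(nat \<Rightarrow> pt \<Rightarrow> pt) \<Rightarrow> nat \<Rightarrow> int \<Rightarrow> pt \<Rightarrow> pt" where
  "hpow h i j = (if j = 1 then h i else inv (h i))"

inductive_set genGroup :: "nat \<Rightarrow> (nat \<Rightarrow> pt \<Rightarrow> pt) \<Rightarrow> (pt \<Rightarrow> pt) set"
  for m h where
  gen_id: "id \<in> genGroup m h"
| gen_step: "\<gamma> \<in> genGroup m h \<Longrightarrow> (i, j) \<in> Idx m \<Longrightarrow> \<gamma> \<circ> hpow h i j \<in> genGroup m h"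

primrec gam :: "(nat \<Rightarrow> pt \<Rightarrow> pt) \<Rightarrow> (nat \<Rightarrow> nat) \<Rightarrow> (nat \<Rightarrow> int) \<Rightarrow> nat \<Rightarrow> pt \<Rightarrow> pt" where
  "gam h ik jk 0 = id"
| "gam h ik jk (Suc k) = gam h ik jk k \<circ> hpow h (ik k) (jk k)"

end

theory Submission
  imports Defs
begin

text \<open>Let \<open>\<gamma> = \<gamma>\<^sub>k\<close>. The open set \<open>\<gamma> H\<^sub>k\<close> meets the plane \<open>P\<close> on one side of the
  line \<open>L\<^sub>k\<close> only, so it misses \<open>L\<^sub>k\<close>, i.e. \<open>\<gamma>\<^sup>-\<^sup>1 L\<^sub>k\<close> lies outside \<open>H\<^sub>k\<close>. By the choice
  of \<open>\<delta>\<^sub>0\<close> the tube \<open>T\<^sub>k(\<delta>)\<close> therefore avoids \<open>\<gamma>\<^sub>k\<^sub>+\<^sub>1 (closure H\<^sub>k\<^sub>+\<^sub>1)\<close>, which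
  contains the stem of the next crooked plane and hence the vertex \<open>c'\<close> of the zigzag
  through which \<open>L\<^sub>k\<^sub>+\<^sub>1\<close> passes. On the other hand \<open>T\<^sub>k(\<delta>)\<close> is open, convex and contains
  the line \<open>L\<^sub>k\<close>, so with any point it contains the whole parallel line through that
  point; if it met \<open>L\<^sub>k\<^sub>+\<^sub>1\<close> it would contain \<open>c'\<close>.\<close>

section \<open>Crooked half-spaces\<close>

text \<open>Columns \<open>u\<close>, \<open>(-u\<^sub>2, u\<^sub>1, 0)/r\<close> and \<open>(u\<^sub>3u\<^sub>1, u\<^sub>3u\<^sub>2, r\<^sup>2)/r\<close> with
  \<open>r\<^sup>2 = u\<^sub>1\<^sup>2 + u\<^sub>2\<^sup>2\<close>: a \<open>B\<close>-orthonormal frame extending the unit spacelike \<open>u\<close>.\<close>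
definition SO0_frame :: "pt \<Rightarrow> real^3^3" where
  "SO0_frame u = (let r = sqrt (u$1^2 + u$2^2) in
     vector [vector [u$1, - u$2 / r, u$3*u$1/r],
             vector [u$2, u$1/r, u$3*u$2/r],
             vector [u$3, 0, r]])"

lemma SO0_frame_spec:
  assumes "unit_spacelike u"
  shows "SO0_frame u \<in> SO0" "SO0_frame u *v v0 = u"
proof -
  define r where "r = sqrt (u$1^2 + u$2^2)"
  have u: "u$1^2 + u$2^2 - u$3^2 = 1"
    using assms by (simp add: unit_spacelike_def mB_def power2_eq_square)
  have r2: "r^2 = u$1^2 + u$2^2" unfolding r_def by simp
  have rpos: "r > 0" unfolding r_def using u
    by (smt (verit) real_sqrt_gt_zero zero_le_power2)
  have g: "\<And>i j. SO0_frame u $ i $ j = (vector [vector [u$1, - u$2 / r, u$3*u$1/r],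
      vector [u$2, u$1/r, u$3*u$2/r], vector [u$3, 0, r]] :: real^3^3) $ i $ j"
    by (simp add: SO0_frame_def r_def Let_def)
  have mv: "\<And>x. SO0_frame u *v x = vector [u$1*x$1 - u$2/r*x$2 + u$3*u$1/r*x$3,
      u$2*x$1 + u$1/r*x$2 + u$3*u$2/r*x$3, u$3*x$1 + r*x$3]"
    by (simp add: vec_eq_iff forall_3 matrix_vector_mult_def sum_3 g)
  have pres: "mB (SO0_frame u *v x) (SO0_frame u *v y) = mB x y" for x y
  proof -
    have e: "r*r = u$1*u$1 + u$2*u$2" using r2 by (simp add: power2_eq_square)
    have e2: "u$1*u$1 + u$2*u$2 - u$3*u$3 = 1" using u by (simp add: power2_eq_square)
    have "r*r*(mB (SO0_frame u *v x) (SO0_frame u *v y)) = r*r*(mB x y)"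
      unfolding mv mB_def using rpos apply (simp add: field_simps)
      using e e2 by algebra
    then show ?thesis using rpos by simp
  qed
  have "r*r*det (SO0_frame u) = r*r"
    unfolding det_3 g using rpos apply (simp add: field_simps)
    using r2 u by (simp add: power2_eq_square) algebra
  then have "det (SO0_frame u) = 1" using rpos by simp
  moreover have "SO0_frame u $ 3 $ 3 > 0" using rpos g by simp
  ultimately show "SO0_frame u \<in> SO0" using pres unfolding SO0_def by auto
  show "SO0_frame u *v v0 = u" unfolding mv v0_def by (simp add: vec_eq_iff forall_3)
qed

lemma gsel_spec:
  assumes "unit_spacelike u"
  shows "gsel u \<in> SO0" "gsel u *v v0 = u"
  using someI[of "\<lambda>g. g \<in> SO0 \<and> g *v v0 = u", OF conjI[OF SO0_frame_spec[OF assms]]]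
  by (simp_all add: gsel_def)

lemma inj_SO0: "g \<in> SO0 \<Longrightarrow> inj ((*v) g)"
  by (intro inj_matrix_vector_mult) (simp add: SO0_def invertible_det_nz)

text \<open>The side of \<open>C0\<close> that contains \<open>hs_cone v0\<close>, with the stem \<open>S0\<close> on its boundary.\<close>
definition C0_side :: "pt set" where
  "C0_side = {x. x$1 > 0 \<and> x$2 + x$3 > 0} \<union> {x. x$1 < 0 \<and> x$2 - x$3 > 0}
             \<union> {x. x$1 = 0 \<and> x$2 > \<bar>x$3\<bar>}"

lemma C0_side_disjoint_C0: "C0_side \<inter> C0 = {}"
  by (auto simp: C0_side_def C0_def W0m_def W0p_def S0_def)

lemma starlike_C0_side: "starlike C0_side"
  unfolding starlike_def
proof (intro bexI ballI)
  let ?e = "vector [0,1,0] :: pt"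
  show "?e \<in> C0_side" by (simp add: C0_side_def)
  fix z assume z: "z \<in> C0_side"
  show "closed_segment ?e z \<subseteq> C0_side"
  proof
    fix y assume "y \<in> closed_segment ?e z"
    then obtain s where s: "0 \<le> s" "s \<le> 1" and y: "y = (1 - s) *\<^sub>R ?e + s *\<^sub>R z"
      by (auto simp: closed_segment_def)
    have y: "y$1 = s * z$1" "y$2 = (1 - s) + s * z$2" "y$3 = s * z$3" by (simp_all add: y)
    show "y \<in> C0_side"
    proof (cases "s = 0")
      case True
      then show ?thesis using y by (simp add: C0_side_def)
    next
      case False
      then have sp: "s > 0" using s by simp
      from z consider "z$1 > 0" "z$2 + z$3 > 0" | "z$1 < 0" "z$2 - z$3 > 0"
        | "z$1 = 0" "z$2 > \<bar>z$3\<bar>"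
        by (auto simp: C0_side_def)
      then show ?thesis
      proof cases
        case 1
        have "s * (z$2 + z$3) > 0" using sp 1 by simp
        then show ?thesis using y sp s 1 by (auto simp: C0_side_def algebra_simps)
      next
        case 2
        have "y$1 < 0" using y sp 2 by (simp add: mult_pos_neg)
        moreover have "s * (z$2 - z$3) > 0" using sp 2 by simp
        ultimately show ?thesis using y s by (simp add: C0_side_def algebra_simps)
      next
        case 3
        have "s * z$2 > s * \<bar>z$3\<bar>" using sp 3 by simp
        then show ?thesis using y s 3 by (auto simp: C0_side_def abs_mult)
      qed
    qed
  qed
qed

lemma S0_subset_closure_C0_side: "S0 \<subseteq> closure C0_side"
proof
  fix x assume x: "x \<in> S0"
  then have x1: "x$1 = 0" "\<bar>x$3\<bar> \<ge> \<bar>x$2\<bar>" by (auto simp: S0_def)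
  obtain e where e: "\<And>t. t > 0 \<Longrightarrow> x + t *\<^sub>R e \<in> C0_side"
  proof (cases "x$2 + x$3 \<ge> 0")
    case True
    show ?thesis
      by (rule that[of "vector [1,1,1]"]) (use True x1 in \<open>simp add: C0_side_def\<close>)
  next
    case False
    then have "x$2 - x$3 \<ge> 0" using x1 by (auto simp: abs_if split: if_splits)
    then show ?thesis
      by (intro that[of "vector [-1,1,-1]"]) (use x1 in \<open>simp add: C0_side_def\<close>)
  qed
  have "(\<lambda>n. x + inverse (real (Suc n)) *\<^sub>R e) \<longlonglongrightarrow> x + 0 *\<^sub>R e"
    by (intro tendsto_intros LIMSEQ_inverse_real_of_nat)
  then show "x \<in> closure C0_side" unfolding closure_sequential
    using e by (intro exI[of _ "\<lambda>n. x + inverse (real (Suc n)) *\<^sub>R e"]) simp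
qed

lemma C0_side_meets_hs_cone:
  assumes "g \<in> SO0"
  shows "\<exists>y\<in>C0_side. g *v y \<in> hs_cone (g *v v0)"
proof -
  have pres: "\<And>x y. mB (g *v x) (g *v y) = mB x y" and g33: "g$3$3 > 0"
    using assms by (auto simp: SO0_def)
  define \<epsilon> where "\<epsilon> = min (1/2) (g$3$3 / (2 * (\<bar>g$3$1\<bar> + 1)))"
  have "g$3$3 / (2 * (\<bar>g$3$1\<bar> + 1)) > 0" using g33 by (intro divide_pos_pos) auto
  then have "\<epsilon> > 0" by (simp add: \<epsilon>_def)
  moreover have "\<epsilon> \<le> 1/2" unfolding \<epsilon>_def by (rule min.cobounded1)
  moreover have "\<epsilon> \<le> g$3$3 / (2 * (\<bar>g$3$1\<bar> + 1))"
    unfolding \<epsilon>_def by (rule min.cobounded2)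
  then have "\<epsilon> * (2 * (\<bar>g$3$1\<bar> + 1)) \<le> g$3$3"
    by (simp add: pos_le_divide_eq add_pos_nonneg)
  ultimately have \<epsilon>: "\<epsilon> > 0" "\<epsilon> \<le> 1/2" "\<epsilon> * (2 * (\<bar>g$3$1\<bar> + 1)) \<le> g$3$3" .
  txt \<open>\<open>y\<close> is timelike with \<open>B(y, v0) = \<epsilon>\<close>; small \<open>\<epsilon>\<close> keeps \<open>g y\<close> future-pointing.\<close>
  define y where "y = (vector [\<epsilon>, 0, 1] :: pt)"
  have "- (\<epsilon> * (\<bar>g$3$1\<bar> + 1)) \<le> g$3$1 * \<epsilon>"
    using mult_right_mono[of "-(\<bar>g$3$1\<bar> + 1)" "g$3$1" \<epsilon>] \<epsilon>(1) by (simp add: algebra_simps)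
  then have "g$3$1 * \<epsilon> + g$3$3 > 0" using \<epsilon> g33 by (simp add: algebra_simps)
  then have "(g *v y)$3 > 0" by (simp add: matrix_vector_mult_def sum_3 y_def)
  moreover have "\<epsilon> * \<epsilon> < 1" using \<epsilon> mult_mono[of \<epsilon> "1/2" \<epsilon> "1/2"] by simp
  then have "mB (g *v y) (g *v y) < 0" unfolding pres by (simp add: mB_def y_def)
  moreover have "mB (g *v y) (g *v v0) > 0" unfolding pres using \<epsilon> by (simp add: mB_def y_def v0_def)
  moreover have "y \<in> C0_side" using \<epsilon> by (simp add: C0_side_def y_def)
  ultimately show ?thesis by (auto simp: hs_cone_def)
qed

lemma C0_side_image_subset_crooked_halfspace:
  assumes u: "unit_spacelike u"
  shows "(\<lambda>x. v + gsel u *v x) ` C0_side \<subseteq> crooked_halfspace u v"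
proof -
  define f where "f = (\<lambda>x. v + gsel u *v x)"
  obtain y where y: "y \<in> C0_side" "gsel u *v y \<in> hs_cone u"
    using C0_side_meets_hs_cone[OF gsel_spec(1)[OF u]] gsel_spec(2)[OF u] by auto
  have "connected (f ` C0_side)" unfolding f_def
    by (intro connected_continuous_image starlike_imp_connected starlike_C0_side continuous_intros)
  moreover have "f ` C0_side \<subseteq> - crooked_plane u v"
    using C0_side_disjoint_C0 inj_SO0[OF gsel_spec(1)[OF u]]
    by (auto simp: f_def crooked_plane_def inj_eq)
  ultimately have "f ` C0_side \<subseteq> connected_component_set (- crooked_plane u v) (f y)"
    using y(1) by (intro connected_component_maximal) auto
  moreover have "f y \<in> (\<lambda>w. v + w) ` hs_cone u" using y(2) by (simp add: f_def)
  ultimately show ?thesis unfolding crooked_halfspace_def f_def by blast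
qed

lemma stem_subset_closure_crooked_halfspace:
  assumes "unit_spacelike u"
  shows "stem u v \<subseteq> closure (crooked_halfspace u v)"
proof -
  define f where "f = (\<lambda>x. v + gsel u *v x)"
  have "continuous_on UNIV f" unfolding f_def by (intro continuous_intros)
  then have "f ` closure C0_side \<subseteq> closure (f ` C0_side)"
    by (intro image_closure_subset) (auto intro: continuous_on_subset closure_subset[THEN subsetD])
  also have "\<dots> \<subseteq> closure (crooked_halfspace u v)"
    using C0_side_image_subset_crooked_halfspace[OF assms] by (simp add: f_def closure_mono)
  finally show ?thesis
    using S0_subset_closure_C0_side unfolding stem_def f_def by blast
qed

lemma closed_C0: "closed C0"
proof -
  have "C0 = ({x. x$1 \<le> 0} \<inter> {x. x$2 = x$3}) \<union> ({x. x$1 = 0} \<inter> {x. \<bar>x$2\<bar> \<le> \<bar>x$3\<bar>})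
      \<union> ({x. 0 \<le> x$1} \<inter> {x. x$2 = - x$3})"
    by (auto simp: C0_def W0m_def W0p_def S0_def)
  moreover have "closed \<dots>"
    by (intro closed_Un closed_Int closed_Collect_le closed_Collect_eq continuous_intros)
  ultimately show ?thesis by simp
qed

lemma open_crooked_halfspace:
  assumes "unit_spacelike u"
  shows "open (crooked_halfspace u v)"
proof -
  have "crooked_plane u v = (+) v ` ((*v) (gsel u) ` C0)"
    by (auto simp: crooked_plane_def image_image)
  moreover have "closed ((*v) (gsel u) ` C0)"
    using closed_injective_linear_image[OF closed_C0 matrix_vector_mul_linear
        inj_SO0[OF gsel_spec(1)[OF assms]]] .
  ultimately have "closed (crooked_plane u v)" using closed_translation by metis
  then show ?thesis unfolding crooked_halfspace_def
    by (auto intro!: open_Union open_connected_component)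
qed

section \<open>Invertible affine maps\<close>

definition invertible_affine :: "(real^'n \<Rightarrow> real^'n) \<Rightarrow> bool" where
  "invertible_affine f \<longleftrightarrow> (\<exists>A b. invertible (A::real^'n^'n) \<and> f = (\<lambda>x. A *v x + b))"

lemma invertible_affine_id: "invertible_affine id"
  unfolding invertible_affine_def
  by (intro exI[of _ "mat 1"] exI[of _ 0]) (simp add: invertible_def fun_eq_iff)

lemma invertible_affine_comp:
  "invertible_affine f \<Longrightarrow> invertible_affine g \<Longrightarrow> invertible_affine (f \<circ> g)"
proof -
  assume "invertible_affine f" "invertible_affine g"
  then obtain A b B c where "invertible A" "f = (\<lambda>x. A *v x + b)"
    and "invertible B" "g = (\<lambda>x. B *v x + c)"
    by (auto simp: invertible_affine_def)
  then show ?thesis unfolding invertible_affine_def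
    by (intro exI[of _ "A ** B"] exI[of _ "A *v c + b"] conjI invertible_mult)
      (simp_all add: fun_eq_iff matrix_vector_right_distrib matrix_vector_mul_assoc)
qed

lemma inv_affine_eq:
  fixes A B :: "real^'n^'n"
  assumes "A ** B = mat 1" "B ** A = mat 1"
  shows "inv (\<lambda>x. A *v x + b) = (\<lambda>y. B *v (y - b))"
  by (rule inv_equality)
    (simp_all add: assms matrix_vector_right_distrib matrix_vector_mult_diff_distrib
      matrix_vector_mul_assoc)

lemma invertible_affine_inv: "invertible_affine f \<Longrightarrow> invertible_affine (inv f)"
proof -
  assume "invertible_affine f"
  then obtain A B b where f: "f = (\<lambda>x. A *v x + b)" and AB: "A ** B = mat 1" "B ** A = mat 1"
    by (auto simp: invertible_affine_def invertible_def)
  have "inv f = (\<lambda>y. B *v y + - (B *v b))"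
    unfolding f inv_affine_eq[OF AB] by (simp add: matrix_vector_mult_diff_distrib)
  moreover have "invertible B" using AB by (auto simp: invertible_def)
  ultimately show ?thesis unfolding invertible_affine_def by blast
qed

lemma bij_invertible_affine: "invertible_affine f \<Longrightarrow> bij f"
proof -
  assume "invertible_affine f"
  then obtain A B b where f: "f = (\<lambda>x. A *v x + b)" and AB: "A ** B = mat 1" "B ** A = mat 1"
    by (auto simp: invertible_affine_def invertible_def)
  show "bij f" unfolding f
    by (rule o_bij[of "\<lambda>y. B *v (y - b)"])
      (simp_all add: AB fun_eq_iff matrix_vector_right_distrib matrix_vector_mult_diff_distrib
        matrix_vector_mul_assoc)
qed

lemma invertible_affine_image_eq:
  assumes "invertible_affine f"
  obtains A b where "invertible A" "\<And>S. f ` S = (+) b ` ((*v) A ` S)"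
  using assms unfolding invertible_affine_def by (auto simp: image_image add.commute)

lemma open_invertible_affine_image:
  assumes "invertible_affine f" "open S"
  shows "open (f ` S)"
proof -
  obtain A b where "invertible A" and f: "\<And>S. f ` S = (+) b ` ((*v) A ` S)"
    using invertible_affine_image_eq[OF assms(1)] by blast
  then have "surj ((*v) A)"
    by (auto simp: invertible_def matrix_right_invertible_surjective[symmetric])
  then show ?thesis unfolding f
    by (intro open_translation open_surjective_linear_image assms(2) matrix_vector_mul_linear)
qed

lemma convex_invertible_affine_image:
  assumes "invertible_affine f" "convex S"
  shows "convex (f ` S)"
proof -
  obtain A b where "\<And>S. f ` S = (+) b ` ((*v) A ` S)"
    using invertible_affine_image_eq[OF assms(1)] by blast
  then show ?thesis
    by (simp add: convex_translation convex_linear_image[OF matrix_vector_mul_linear assms(2)])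
qed

lemma isom0_invertible_affine: "isom0 f \<Longrightarrow> invertible_affine f"
  unfolding isom0_def invertible_affine_def SO0_def
  by (auto simp: invertible_det_nz) (metis zero_neq_one)

lemma invertible_affine_gam:
  assumes "\<forall>i\<in>{1..m}. isom0 (h i)" "\<forall>k. (ik k, jk k) \<in> Idx m"
  shows "invertible_affine (gam h ik jk n)"
proof (induction n)
  case 0
  show ?case unfolding gam.simps by (rule invertible_affine_id)
next
  case (Suc n)
  have "invertible_affine (h (ik n))"
    using assms by (auto simp: Idx_def intro: isom0_invertible_affine)
  then have "invertible_affine (hpow h (ik n) (jk n))"
    by (simp add: hpow_def invertible_affine_inv)
  then show ?case unfolding gam.simps using Suc by (rule invertible_affine_comp[rotated])
qed

section \<open>Euclidean neighbourhoods and convexity\<close>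

lemma nbhd_eq_sums: "nbhd S \<delta> = (\<Union>x\<in>S. \<Union>y\<in>ball 0 \<delta>. {x + y})"
proof (intro set_eqI iffI)
  fix x assume "x \<in> nbhd S \<delta>"
  then obtain s where "s \<in> S" "x - s \<in> ball 0 \<delta>"
    by (auto simp: nbhd_def dist_norm norm_minus_commute)
  then show "x \<in> (\<Union>x\<in>S. \<Union>y\<in>ball 0 \<delta>. {x + y})" by force
next
  fix x assume "x \<in> (\<Union>x\<in>S. \<Union>y\<in>ball 0 \<delta>. {x + y})"
  then show "x \<in> nbhd S \<delta>" by (force simp: nbhd_def dist_norm)
qed

lemma open_nbhd: "open (nbhd S \<delta>)"
  unfolding nbhd_eq_sums by (intro open_sums) simp

lemma convex_nbhd: "convex S \<Longrightarrow> convex (nbhd S \<delta>)"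
  unfolding nbhd_eq_sums by (intro convex_sums convex_ball)

lemma nbhd_mono: "S \<subseteq> S' \<Longrightarrow> \<delta> \<le> \<delta>' \<Longrightarrow> nbhd S \<delta> \<subseteq> nbhd S' \<delta>'"
  unfolding nbhd_def by (force intro: less_le_trans)

lemma subset_nbhd: "\<delta> > 0 \<Longrightarrow> S \<subseteq> nbhd S \<delta>"
  unfolding nbhd_def by force

lemma nbhd_empty: "\<delta> \<le> 0 \<Longrightarrow> nbhd S \<delta> = {}"
  unfolding nbhd_def by (auto dest: order.strict_trans1[OF zero_le_dist])

text \<open>Push \<open>z\<close> slightly away from \<open>c\<close> and average with a far point of the line.\<close>
lemma open_convex_translate_along_line:
  fixes T :: "'a::real_normed_vector set"
  assumes "convex T" "open T" "z \<in> T" and line: "\<And>t. c + t *\<^sub>R w \<in> T"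
  shows "z + w \<in> T"
proof -
  obtain e where e: "e > 0" "ball z e \<subseteq> T" using assms(2,3) open_contains_ball by blast
  define r where "r = e / (norm (z - c) + 1)"
  have n: "norm (z - c) + 1 > 0" by (simp add: add_nonneg_pos)
  have r: "r > 0" "r * norm (z - c) < e"
    using e n by (simp_all add: r_def divide_simps)
  have "z + r *\<^sub>R (z - c) \<in> ball z e" using r by (simp add: dist_norm)
  then have near: "z + r *\<^sub>R (z - c) \<in> T" using e by blast
  have "(1/(1+r)) *\<^sub>R ((1 + r) *\<^sub>R z) = z" "r + r * r > 0" using r by (simp_all add: add_pos_pos)
  then have "z + w = (1/(1+r)) *\<^sub>R (z + r *\<^sub>R (z - c)) + (r/(1+r)) *\<^sub>R (c + ((1+r)/r) *\<^sub>R w)"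
    by (simp add: algebra_simps)
  also have "\<dots> \<in> T"
    using r by (intro convexD[OF assms(1) near line]) (simp_all add: field_simps)
  finally show ?thesis .
qed

lemma open_disjoint_level_set:
  fixes G :: "'a::real_inner set"
  assumes "open G" "G \<inter> P \<subseteq> {x. (x - c) \<bullet> d \<le> 0}" "\<And>x s. x \<in> P \<Longrightarrow> x + s *\<^sub>R d \<in> P"
    "d \<noteq> 0"
  shows "G \<inter> {x \<in> P. (x - c) \<bullet> d = 0} = {}"
proof (rule ccontr)
  assume "G \<inter> {x \<in> P. (x - c) \<bullet> d = 0} \<noteq> {}"
  then obtain x where x: "x \<in> G" "x \<in> P" "(x - c) \<bullet> d = 0" by auto
  obtain e where e: "e > 0" "ball x e \<subseteq> G" using assms(1) x(1) open_contains_ball by blast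
  define t where "t = e / (2 * norm d)"
  have t: "t > 0" "t * norm d < e" using e assms(4) by (auto simp: t_def)
  then have "x + t *\<^sub>R d \<in> G \<inter> P" using e x(2) assms(3) by (auto simp: dist_norm)
  then have "(x + t *\<^sub>R d - c) \<bullet> d \<le> 0" using assms(2) by auto
  moreover have "(x + t *\<^sub>R d - c) \<bullet> d = t * (d \<bullet> d)"
    using x(3) by (simp add: algebra_simps inner_add_left)
  moreover have "t * (d \<bullet> d) > 0" using t(1) assms(4) by simp
  ultimately show False by simp
qed

section \<open>Tubes around consecutive lines\<close>

lemma tube_disjoint_parallel_line:
  fixes \<gamma> h :: "pt \<Rightarrow> pt"
  assumes \<gamma>: "invertible_affine \<gamma>"
    and H: "open H" and H': "nbhd (- H) \<delta>0 \<subseteq> - (h ` closure H')" and "\<delta> \<le> \<delta>0"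
    and W: "subspace W" and P: "P = (+) p ` W" and d: "d \<in> W" "d \<noteq> 0"
    and L: "L = {x \<in> P. (x - c) \<bullet> d = 0}" "c \<in> P"
    and side: "\<gamma> ` H \<inter> P \<subseteq> {x. (x - c) \<bullet> d \<le> 0} \<or> \<gamma> ` H \<inter> P \<subseteq> {x. (x - c) \<bullet> d \<ge> 0}"
    and L': "L' = {x \<in> P. (x - c') \<bullet> d = 0}" "c' \<in> P" "c' \<in> \<gamma> ` h ` closure H'"
  shows "\<gamma> ` nbhd (inv \<gamma> ` L) \<delta> \<inter> L' = {}"
proof (cases "\<delta> > 0")
  case False
  then show ?thesis by (simp add: nbhd_empty)
next
  case True
  define T where "T = \<gamma> ` nbhd (inv \<gamma> ` L) \<delta>"
  have bij: "bij \<gamma>" using bij_invertible_affine[OF \<gamma>] .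
  have P_add: "x + w \<in> P" if "x \<in> P" "w \<in> W" for x w
    using that W by (auto simp: P add.assoc subspace_add)
  have P_diff: "x - y \<in> W" if "x \<in> P" "y \<in> P" for x y
    using that W by (auto simp: P subspace_diff)
  have L_outside: "\<gamma> ` H \<inter> L = {}"
  proof -
    have open_H: "open (\<gamma> ` H)" using open_invertible_affine_image[OF \<gamma> H] .
    have line: "x + s *\<^sub>R d \<in> P" "x + s *\<^sub>R (- d) \<in> P" if "x \<in> P" for x s
      using P_add[OF that, of "s *\<^sub>R d"] P_add[OF that, of "(- s) *\<^sub>R d"] W d(1)
      by (simp_all add: subspace_scale subspace_neg)
    from side show ?thesis
    proof (elim disjE)
      assume "\<gamma> ` H \<inter> P \<subseteq> {x. (x - c) \<bullet> d \<le> 0}"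
      from open_disjoint_level_set[OF open_H this line(1) d(2)] show ?thesis unfolding L .
    next
      assume "\<gamma> ` H \<inter> P \<subseteq> {x. (x - c) \<bullet> d \<ge> 0}"
      then have "\<gamma> ` H \<inter> P \<subseteq> {x. (x - c) \<bullet> - d \<le> 0}" by auto
      from open_disjoint_level_set[OF open_H this line(2)] d(2) show ?thesis unfolding L by simp
    qed
  qed
  have "inv \<gamma> ` L \<subseteq> - H"
  proof
    fix y assume "y \<in> inv \<gamma> ` L"
    then obtain x where "x \<in> L" "y = inv \<gamma> x" by blast
    then have "\<gamma> y \<in> L" using bij by (simp add: bij_inv_eq_iff)
    then show "y \<in> - H" using L_outside by blast
  qed
  then have "nbhd (inv \<gamma> ` L) \<delta> \<subseteq> - (h ` closure H')"
    using nbhd_mono[OF _ \<open>\<delta> \<le> \<delta>0\<close>] H' by blast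
  then have T_avoids: "T \<subseteq> - (\<gamma> ` h ` closure H')"
    unfolding T_def bij_image_Compl_eq[OF bij, symmetric] by (rule image_mono)
  have "convex L"
  proof -
    have "convex P" unfolding P by (intro convex_translation subspace_imp_convex W)
    moreover have "L = P \<inter> {x. d \<bullet> x = d \<bullet> c}"
      unfolding L by (auto simp: inner_commute[of _ d] inner_diff_right)
    ultimately show ?thesis by (simp add: convex_Int convex_hyperplane)
  qed
  then have T_convex: "convex T" unfolding T_def
    by (intro convex_invertible_affine_image[OF \<gamma>] convex_nbhd
        convex_invertible_affine_image[OF invertible_affine_inv[OF \<gamma>]])
  have T_open: "open T" unfolding T_def by (rule open_invertible_affine_image[OF \<gamma> open_nbhd])
  have L_in_T: "L \<subseteq> T"
  proof
    fix x assume "x \<in> L"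
    then have "inv \<gamma> x \<in> nbhd (inv \<gamma> ` L) \<delta>" using subset_nbhd[OF True] by blast
    moreover have "\<gamma> (inv \<gamma> x) = x" using bij by (simp add: bij_is_surj surj_f_inv_f)
    ultimately show "x \<in> T" unfolding T_def by (metis imageI)
  qed
  have parallel: "c' \<in> T" if "z \<in> T" "z \<in> L'" for z
  proof -
    have w: "c' - z \<in> W" "(c' - z) \<bullet> d = 0"
      using that(2) L' by (auto simp: P_diff inner_diff_left)
    have "c + t *\<^sub>R (c' - z) \<in> L" for t
      unfolding L using P_add[OF L(2) subspace_scale[OF W w(1)]] w(2) by simp
    then have "z + (c' - z) \<in> T"
      using open_convex_translate_along_line[OF T_convex T_open that(1)] L_in_T by blast
    then show ?thesis by simp
  qed
  show ?thesis unfolding T_def[symmetric]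
  proof (rule ccontr)
    assume "T \<inter> L' \<noteq> {}"
    then obtain z where "z \<in> T" "z \<in> L'" by blast
    then have "c' \<in> T" by (rule parallel)
    with T_avoids L'(3) show False by blast
  qed
qed

theorem mainTheorem12:
  fixes m :: nat
    and h :: "nat \<Rightarrow> pt \<Rightarrow> pt"
    and U V :: "nat \<Rightarrow> int \<Rightarrow> pt"
    and H :: "nat \<Rightarrow> int \<Rightarrow> pt set"
    and \<delta>0 :: real
    and p :: pt
    and ik :: "nat \<Rightarrow> nat" and jk :: "nat \<Rightarrow> int"
    and W :: "pt set" and P :: "pt set"
    and d :: pt
    and L :: "nat \<Rightarrow> pt set"
  assumes h_isom: "\<forall>i\<in>{1..m}. isom0 (h i)"
    and H_def: "\<forall>(i, j)\<in>Idx m. unit_spacelike (U i j) \<and> H i j = crooked_halfspace (U i j) (V i j)"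
    and H_disj: "\<forall>(i, j)\<in>Idx m. \<forall>(i', j')\<in>Idx m. (i, j) \<noteq> (i', j') \<longrightarrow> H i j \<inter> H i' j' = {}"
    and H_pair: "\<forall>i\<in>{1..m}. h i ` H i (-1) = - closure (H i 1)"
    and \<delta>0_pos: "\<delta>0 > 0"
    and \<delta>0_prop: "\<forall>(i, j)\<in>Idx m. \<forall>(i', j')\<in>Idx m. (i, j) \<noteq> (i', - j') \<longrightarrow>
                    nbhd (- H i j) \<delta>0 \<subseteq> - (hpow h i j ` closure (H i' j'))"
    and p_notin: "p \<notin> (\<Union>\<gamma>\<in>genGroup m h. \<gamma> ` closure (- (\<Union>(i, j)\<in>Idx m. closure (H i j))))"
    and seq_idx: "\<forall>k. (ik k, jk k) \<in> Idx m"
    and seq_red: "\<forall>k. (ik k, jk k) \<noteq> (ik (Suc k), - jk (Suc k))"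
    and nested: "\<forall>k. gam h ik jk (Suc k) ` H (ik (Suc k)) (jk (Suc k)) \<subset> gam h ik jk k ` H (ik k) (jk k)"
    and p_in: "\<forall>k. p \<in> gam h ik jk k ` H (ik k) (jk k)"
    and angle0: "hs_angle (U (ik 0) (jk 0)) < pi / 2"
    and W_sub: "subspace W" and W_dim: "dim W = 2"
    and W_def: "\<forall>w\<in>W. w \<noteq> 0 \<longrightarrow> mB w w > 0"
    and P_def: "P = (\<lambda>w. p + w) ` W"
    and P_novertex: "\<forall>\<gamma>\<in>genGroup m h. \<forall>(i, j)\<in>Idx m. \<gamma> (V i j) \<notin> P"
    and d_dir: "d \<in> W" "d \<noteq> 0"
    and d_par: "\<exists>a b. P \<inter> stem (U (ik 0) (jk 0)) (V (ik 0) (jk 0)) = closed_segment a b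
                  \<and> (\<exists>t. b - a = t *\<^sub>R d)"
    and L_def: "\<forall>k. \<exists>c a b.
        P \<inter> gam h ik jk k ` stem (U (ik k) (jk k)) (V (ik k) (jk k)) = closed_segment a b
        \<and> (c = a \<or> c = b)
        \<and> L k = {x \<in> P. (x - c) \<bullet> d = 0}
        \<and> (gam h ik jk k ` H (ik k) (jk k) \<inter> P \<subseteq> {x \<in> P. (x - c) \<bullet> d \<le> 0}
           \<or> gam h ik jk k ` H (ik k) (jk k) \<inter> P \<subseteq> {x \<in> P. (x - c) \<bullet> d \<ge> 0})"
  shows "\<forall>\<delta>. \<delta> \<le> \<delta>0 \<longrightarrow> (\<forall>k.
           gam h ik jk k ` nbhd (inv (gam h ik jk k) ` L k) \<delta> \<inter> L (Suc k) = {})"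
proof (intro allI impI)
  fix \<delta> :: real and k :: nat
  assume "\<delta> \<le> \<delta>0"
  define i j i' j' where "i = ik k" "j = jk k" "i' = ik (Suc k)" "j' = jk (Suc k)"
  have ij: "(i, j) \<in> Idx m" "(i', j') \<in> Idx m" "(i, j) \<noteq> (i', - j')"
    using seq_idx seq_red by (auto simp: i_j_i'_j'_def)
  have H_ij: "open (H i j)" and H_i'j': "H i' j' = crooked_halfspace (U i' j') (V i' j')"
      "unit_spacelike (U i' j')"
    using H_def ij(1,2) open_crooked_halfspace by auto
  have \<delta>0_ij: "nbhd (- H i j) \<delta>0 \<subseteq> - (hpow h i j ` closure (H i' j'))"
    using \<delta>0_prop ij by fast
  obtain c a b where c: "P \<inter> gam h ik jk k ` stem (U i j) (V i j) = closed_segment a b"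
      "c = a \<or> c = b" "L k = {x \<in> P. (x - c) \<bullet> d = 0}"
      "gam h ik jk k ` H i j \<inter> P \<subseteq> {x \<in> P. (x - c) \<bullet> d \<le> 0}
       \<or> gam h ik jk k ` H i j \<inter> P \<subseteq> {x \<in> P. (x - c) \<bullet> d \<ge> 0}"
    using L_def unfolding i_j_i'_j'_def by blast
  obtain c' a' b' where c': "P \<inter> gam h ik jk (Suc k) ` stem (U i' j') (V i' j') = closed_segment a' b'"
      "c' = a' \<or> c' = b'" "L (Suc k) = {x \<in> P. (x - c') \<bullet> d = 0}"
    using L_def unfolding i_j_i'_j'_def by blast
  have "c' \<in> gam h ik jk (Suc k) ` stem (U i' j') (V i' j')" "c' \<in> P"
    using c'(1,2) by auto
  then have "c' \<in> gam h ik jk k ` hpow h i j ` closure (H i' j')"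
    using stem_subset_closure_crooked_halfspace[OF H_i'j'(2)]
    by (auto simp: i_j_i'_j'_def image_comp H_i'j'(1)[unfolded i_j_i'_j'_def])
  show "gam h ik jk k ` nbhd (inv (gam h ik jk k) ` L k) \<delta> \<inter> L (Suc k) = {}"
  proof (rule tube_disjoint_parallel_line[OF _ H_ij \<delta>0_ij \<open>\<delta> \<le> \<delta>0\<close> W_sub _ d_dir c(3) _ _ c'(3)])
    show "invertible_affine (gam h ik jk k)" using invertible_affine_gam[OF h_isom seq_idx] .
  qed (use P_def c c' \<open>c' \<in> P\<close> \<open>c' \<in> gam h ik jk k ` _\<close> in auto)
qed

end
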